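(* Assume that $\Omega$ is open. The real $^*$-algebra $\mathcal{SR}(\Omega)$ of slice regular functions on $\Omega$ is nonsingular (i.e., $N(f)\equiv0$ implies $f\equiv0$ for $f\in\mathcal{SR}(\Omega)$) if and only if $A$ is nonsingular and $\Omega$ is a union of slice domains.
   Context: Let $A$ be a finite-dimensional real algebra with unit $1$ ($\mathbb{R}$ identified with $\mathbb{R}1$) which is alternative (the associator $(x,y,z)=(xy)z-x(yz)$ is alternating), with a $^*$-involution $x\mapsto x^c$ (real linear, $(x^c)^c=x$, $(xy)^c=y^cx^c$, $r^c=r$ for $r\in\mathbb{R}$). Let $t(x)=x+x^c$, $n(x)=xx^c$; $A$ is nonsingular if $n(x)=0$ implies $x=0$. Let $\mathbb{S}_A=\{J\in A:t(J)=0,n(J)=1\}$ (assumed non-empty), $Q_A=\mathbb{R}\cup\{x:t(x),n(x)\in\mathbb{R},4n(x)>t(x)^2\}$; every $x\in Q_A$ is $\alpha+\beta J$ with $\alpha,\beta\in\mathbb{R}$, $J\in\mathbb{S}_A$. For $E\subseteq\mathbb{C}$ invariant under conjugation let $\Omega_E=\{\alpha+\beta J:\alpha+i\beta\in E,J\in\mathbb{S}_A\}$; here $\Omega=\Omega_D$ with $D$ open non-empty and conjugation-invariant. $\Omega_E$ is a slice domain if $E$ is open, connected and meets $\mathbb{R}$. $A_{\mathbb{C}}=\{a+\imath b\}$ with $(a+\imath b)(a'+\imath b')=aa'-bb'+\imath(ab'+ba')$, $\overline{a+\imath b}=a-\imath b$, $(a+\imath b)^c=a^c+\imath b^c$. A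 stem function $F=F_1+\imath F_2:D\to A_{\mathbb{C}}$ satisfies $F(\bar z)=\overline{F(z)}$ and induces $f=\mathcal{I}(F)$, $f(\alpha+\beta J)=F_1(\alpha+i\beta)+JF_2(\alpha+i\beta)$; $f$ is slice regular if $F$ is $\mathscr{C}^1$ and $\frac12\big(\frac{\partial F}{\partial\alpha}+\imath\frac{\partial F}{\partial\beta}\big)\equiv0$. $\mathcal{SR}(\Omega)$ is a $^*$-algebra with pointwise sum, slice product $f\cdot g=\mathcal{I}(FG)$, conjugation $f^c=\mathcal{I}(F^c)$ ($F^c(z)=F(z)^c$), and norm $N(f)=f\cdot f^c$. *)

theory Defs
  imports "HOL-Analysis.Analysis"
begin

text \<open>The algebra A is a finite-dimensional real vector space (a type of class
euclidean_space) equipped with a (not necessarily associative) multiplication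
and unit (syntactic classes times and one) and a real linear map cj,
the *-involution x to x^c. The reals are identified with the multiples r *R 1.\<close>

definition associator :: "'a::{real_vector,times} \<Rightarrow> 'a \<Rightarrow> 'a \<Rightarrow> 'a" where
  "associator x y z = (x * y) * z - x * (y * z)"

definition alt_star_algebra :: "('a::{euclidean_space,times,one} \<Rightarrow> 'a) \<Rightarrow> bool" where
  "alt_star_algebra cj \<longleftrightarrow>
     bilinear ((*) :: 'a \<Rightarrow> 'a \<Rightarrow> 'a) \<and>
     (1::'a) \<noteq> 0 \<and>
     (\<forall>x::'a. 1 * x = x \<and> x * 1 = x) \<and>
     (\<forall>x y::'a. associator x x y = 0 \<and> associator x y x = 0 \<and> associator y x x = 0) \<and>
     linear cj \<and>
     (\<forall>x. cj (cj x) = x) \<and>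
     (\<forall>x y. cj (x * y) = cj y * cj x) \<and>
     (\<forall>r::real. cj (r *\<^sub>R 1) = r *\<^sub>R 1)"

definition trace_A :: "('a::{euclidean_space,times,one} \<Rightarrow> 'a) \<Rightarrow> 'a \<Rightarrow> 'a" where
  "trace_A cj x = x + cj x"

definition norm_A :: "('a::{euclidean_space,times,one} \<Rightarrow> 'a) \<Rightarrow> 'a \<Rightarrow> 'a" where
  "norm_A cj x = x * cj x"

definition nonsingular_alg :: "('a::{euclidean_space,times,one} \<Rightarrow> 'a) \<Rightarrow> bool" where
  "nonsingular_alg cj \<longleftrightarrow> (\<forall>x. norm_A cj x = 0 \<longrightarrow> x = 0)"

definition sphere_A :: "('a::{euclidean_space,times,one} \<Rightarrow> 'a) \<Rightarrow> 'a set" where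
  "sphere_A cj = {J. trace_A cj J = 0 \<and> norm_A cj J = 1}"

definition Omega :: "('a::{euclidean_space,times,one} \<Rightarrow> 'a) \<Rightarrow> complex set \<Rightarrow> 'a set" where
  "Omega cj E = {\<alpha> *\<^sub>R 1 + \<beta> *\<^sub>R J | \<alpha> \<beta> J. Complex \<alpha> \<beta> \<in> E \<and> J \<in> sphere_A cj}"

definition slice_domain :: "('a::{euclidean_space,times,one} \<Rightarrow> 'a) \<Rightarrow> 'a set \<Rightarrow> bool" where
  "slice_domain cj U \<longleftrightarrow>
     (\<exists>E. open E \<and> connected E \<and> E \<inter> \<real> \<noteq> {} \<and> (\<forall>z\<in>E. cnj z \<in> E) \<and> U = Omega cj E)"

text \<open>The complexification A_C = A + i A is represented by pairs (a, b) = a + i b.\<close>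
definition cmult :: "'a::{real_vector,times} \<times> 'a \<Rightarrow> 'a \<times> 'a \<Rightarrow> 'a \<times> 'a" where
  "cmult p q = (fst p * fst q - snd p * snd q, fst p * snd q + snd p * fst q)"

definition imult :: "'a::real_vector \<times> 'a \<Rightarrow> 'a \<times> 'a" where
  "imult p = (- snd p, fst p)"

definition stem :: "complex set \<Rightarrow> (complex \<Rightarrow> 'a::real_vector \<times> 'a) \<Rightarrow> bool" where
  "stem D F \<longleftrightarrow> (\<forall>z\<in>D. F (cnj z) = (fst (F z), - snd (F z)))"

text \<open>F is of class C^1 on D (viewing C = R^2): differentiable with continuous
partial derivatives d/d alpha (direction 1) and d/d beta (direction i).\<close>
definition C1_on :: "complex set \<Rightarrow> (complex \<Rightarrow> 'a::real_normed_vector) \<Rightarrow> bool" where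
  "C1_on D F \<longleftrightarrow> (\<forall>z\<in>D. F differentiable (at z)) \<and>
     continuous_on D (\<lambda>z. frechet_derivative F (at z) 1) \<and>
     continuous_on D (\<lambda>z. frechet_derivative F (at z) \<i>)"

definition slice_regular_stem :: "complex set \<Rightarrow> (complex \<Rightarrow> 'a::real_normed_vector \<times> 'a) \<Rightarrow> bool" where
  "slice_regular_stem D F \<longleftrightarrow> stem D F \<and> C1_on D F \<and>
     (\<forall>z\<in>D. frechet_derivative F (at z) 1 + imult (frechet_derivative F (at z) \<i>) = 0)"

definition induced :: "('a::{euclidean_space,times,one} \<Rightarrow> 'a) \<Rightarrow> complex set \<Rightarrow> (complex \<Rightarrow> 'a \<times> 'a) \<Rightarrow> 'a \<Rightarrow> 'a" where
  "induced cj D F x = (SOME y. \<exists>\<alpha> \<beta> J. J \<in> sphere_A cj \<and> Complex \<alpha> \<beta> \<in> D \<and>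
      x = \<alpha> *\<^sub>R 1 + \<beta> *\<^sub>R J \<and> y = fst (F (Complex \<alpha> \<beta>)) + J * snd (F (Complex \<alpha> \<beta>)))"

definition stem_prod :: "(complex \<Rightarrow> 'a::{real_vector,times} \<times> 'a) \<Rightarrow> (complex \<Rightarrow> 'a \<times> 'a) \<Rightarrow> complex \<Rightarrow> 'a \<times> 'a" where
  "stem_prod F G z = cmult (F z) (G z)"

definition stem_conj :: "('a \<Rightarrow> 'a) \<Rightarrow> (complex \<Rightarrow> 'a \<times> 'a) \<Rightarrow> complex \<Rightarrow> 'a \<times> 'a" where
  "stem_conj cj F z = (cj (fst (F z)), cj (snd (F z)))"

text \<open>SR(Omega_D) consists of the functions I(F), F a slice regular stem function on D;
N(I(F)) = I(F F^c). Nonsingularity of SR(Omega_D): N(f) = 0 on Omega_D implies f = 0 on Omega_D.\<close>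
definition SR :: "('a::{euclidean_space,times,one} \<Rightarrow> 'a) \<Rightarrow> complex set \<Rightarrow> ('a \<Rightarrow> 'a) set" where
  "SR cj D = {f. \<exists>F. slice_regular_stem D F \<and> (\<forall>x\<in>Omega cj D. f x = induced cj D F x)}"

definition SR_nonsingular :: "('a::{euclidean_space,times,one} \<Rightarrow> 'a) \<Rightarrow> complex set \<Rightarrow> bool" where
  "SR_nonsingular cj D \<longleftrightarrow>
     (\<forall>F. slice_regular_stem D F \<longrightarrow>
        (\<forall>x\<in>Omega cj D. induced cj D (stem_prod F (stem_conj cj F)) x = 0) \<longrightarrow>
        (\<forall>x\<in>Omega cj D. induced cj D F x = 0))"

end

theory Submission
  imports Defs "HOL-Complex_Analysis.Complex_Analysis"
begin

text \<open>Since A is alternative and J J = -1 for J in the sphere, a slice function I(F)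
vanishes on Omega_D exactly when its stem F vanishes on D; so SR(Omega_D) is nonsingular iff
F F^c = 0 on D forces F = 0 on D for every slice regular stem F.
If A is nonsingular, F F^c = 0 forces F = 0 at the real points of D. The coordinates of a slice
regular stem are holomorphic, so by the identity principle F then vanishes on every connected
component of D meeting the real axis; these components cover D exactly when Omega_D is a union of
slice domains. Conversely, the constant stem x with n(x) = 0 shows that A is nonsingular, and if a
component C of D misses the real axis, the locally constant stem 1 + i sgn(Im z) J on C and its
conjugate (and 0 elsewhere) is a nonzero stem with F F^c = 0.\<close>

definition components_meet_real :: "complex set \<Rightarrow> bool" where
  "components_meet_real D \<longleftrightarrow> (\<forall>z\<in>D. connected_component_set D z \<inter> \<real> \<noteq> {})"

subsection \<open>Conjugation-invariant sets of complex numbers\<close>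

lemma cnj_in_connected_component:
  assumes D: "\<forall>z\<in>D. cnj z \<in> D" and v: "v \<in> connected_component_set D w"
  shows "cnj v \<in> connected_component_set D (cnj w)"
proof -
  have "w \<in> connected_component_set D w"
    using v connected_component_in by fastforce
  then have "cnj ` connected_component_set D w \<subseteq> connected_component_set D (cnj w)"
  proof (intro connected_component_maximal)
    show "connected (cnj ` connected_component_set D w)"
      by (intro connected_continuous_image continuous_intros connected_connected_component)
    show "cnj ` connected_component_set D w \<subseteq> D"
      using connected_component_subset[of D w] D by blast
  qed blast
  then show ?thesis using v by blast
qed

lemma connected_component_cnj_closed:
  assumes D: "\<forall>z\<in>D. cnj z \<in> D" and r: "r \<in> connected_component_set D z" "r \<in> \<real>"
    and w: "w \<in> connected_component_set D z"
  shows "cnj w \<in> connected_component_set D z"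
proof -
  have "cnj w \<in> connected_component_set D (cnj r)"
    using cnj_in_connected_component[OF D] r(1) w
    by (metis connected_component_eq)
  also have "cnj r = r" using r(2) by (simp add: Reals_cnj_iff)
  finally show ?thesis using connected_component_eq[OF r(1)] by simp
qed

lemma connected_component_or_cnj_iff:
  assumes D: "\<forall>z\<in>D. cnj z \<in> D" and v: "v \<in> connected_component_set D w"
  shows "(v \<in> connected_component_set D z \<or> cnj v \<in> connected_component_set D z) \<longleftrightarrow>
         (w \<in> connected_component_set D z \<or> cnj w \<in> connected_component_set D z)"
proof -
  have "connected_component D w v" "connected_component D (cnj w) (cnj v)"
    using v cnj_in_connected_component[OF D v] by simp_all
  then show ?thesis
    unfolding mem_Collect_eq by (meson connected_component_sym connected_component_trans)
qed

lemma islimpt_Int_Reals: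
  fixes r :: complex
  assumes "r \<in> \<real>" and "open E" and "r \<in> E"
  shows "r islimpt E \<inter> \<real>"
proof -
  have "r islimpt \<real>" unfolding islimpt_approachable
  proof (intro allI impI)
    fix d :: real assume "d > 0"
    then show "\<exists>x\<in>\<real>. x \<noteq> r \<and> dist x r < d"
      using assms(1) by (intro bexI[of _ "r + of_real (d / 2)"]) (auto simp: dist_norm)
  qed
  then have "r islimpt \<real> \<inter> E"
    using assms by (intro islimpt_Int_eventually eventually_at_in_open')
  then show ?thesis by (simp add: Int_commute)
qed

lemma sgn_Im_eq_if_dist_less:
  assumes "dist v w < \<bar>Im w\<bar>"
  shows "sgn (Im v) = sgn (Im w)"
proof -
  have "\<bar>Im v - Im w\<bar> < \<bar>Im w\<bar>"
    using assms abs_Im_le_cmod[of "v - w"] by (simp add: dist_norm)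
  then consider "Im w > 0" "Im v > 0" | "Im w < 0" "Im v < 0"
    by (cases "Im w > 0") (auto simp: abs_less_iff)
  then show ?thesis by cases simp_all
qed

subsection \<open>Stem functions\<close>

lemma stem_snd_real:
  assumes "stem D F" and "r \<in> D" and "r \<in> \<real>"
  shows "snd (F r) = 0"
proof -
  have "cnj r = r" using assms(3) by (simp add: Reals_cnj_iff)
  then have "snd (F r) = - snd (F r)"
    using assms(1,2) unfolding stem_def by (metis snd_conv)
  then show ?thesis by (simp add: eq_neg_iff_add_eq_0 flip: scaleR_2)
qed

lemma slice_regular_stem_locally_constant:
  assumes "stem D F" and lc: "\<forall>z\<in>D. \<exists>e>0. \<forall>w\<in>ball z e. F w = F z"
  shows "slice_regular_stem D F"
proof -
  have deriv: "(F has_derivative (\<lambda>h. 0)) (at z)" if "z \<in> D" for z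
  proof -
    obtain e where "e > 0" and e: "\<forall>w\<in>ball z e. F w = F z" using lc \<open>z \<in> D\<close> by blast
    show ?thesis
      using has_derivative_const open_ball centre_in_ball[THEN iffD2, OF \<open>e > 0\<close>]
    proof (rule has_derivative_transform_within_open)
      show "F z = F w" if "w \<in> ball z e" for w
        using e that by metis
    qed
  qed
  have F': "frechet_derivative F (at z) = (\<lambda>h. 0)" if "z \<in> D" for z
    using frechet_derivative_at[OF deriv[OF that]] by simp
  then have "continuous_on D (\<lambda>z. frechet_derivative F (at z) v)" for v
    using continuous_on_cong[of D D "\<lambda>z. frechet_derivative F (at z) v" "\<lambda>z. 0"] by simp
  moreover have "F differentiable at z" if "z \<in> D" for z
    using deriv[OF that] unfolding differentiable_def by blast
  ultimately show ?thesis
    using assms(1) F' unfolding slice_regular_stem_def C1_on_def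
    by (simp add: imult_def zero_prod_def)
qed

definition sign_stem :: "complex set \<Rightarrow> 'a::real_vector \<Rightarrow> 'a \<Rightarrow> complex \<Rightarrow> 'a \<times> 'a" where
  "sign_stem C a b w = (if w \<in> C \<or> cnj w \<in> C then (a, sgn (Im w) *\<^sub>R b) else (0, 0))"

lemma stem_sign_stem: "stem D (sign_stem C a b)"
  by (simp add: stem_def sign_stem_def sgn_minus)

lemma slice_regular_stem_sign_stem:
  assumes "open D" and D: "\<forall>z\<in>D. cnj z \<in> D" and C: "C = connected_component_set D z"
    and "C \<inter> \<real> = {}"
  shows "slice_regular_stem D (sign_stem C a b)"
proof (rule slice_regular_stem_locally_constant[OF stem_sign_stem ballI])
  fix w assume "w \<in> D"
  define inC where "inC = (\<lambda>v. v \<in> C \<or> cnj v \<in> C)"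
  have "w \<in> connected_component_set D w" using \<open>w \<in> D\<close> by simp
  with open_connected_component[OF \<open>open D\<close>]
  obtain e where "e > 0" and e: "ball w e \<subseteq> connected_component_set D w"
    by (rule openE)
  have inC: "inC v \<longleftrightarrow> inC w" if "v \<in> ball w e" for v
    using connected_component_or_cnj_iff[OF D] e that unfolding inC_def C by blast
  show "\<exists>e>0. \<forall>v\<in>ball w e. sign_stem C a b v = sign_stem C a b w"
  proof (cases "inC w")
    case True
    then have "Im w \<noteq> 0"
      using \<open>C \<inter> \<real> = {}\<close> by (auto simp: inC_def complex_is_Real_iff)
    show ?thesis
    proof (intro exI[of _ "min e \<bar>Im w\<bar>"] conjI ballI)
      show "min e \<bar>Im w\<bar> > 0" using \<open>e > 0\<close> \<open>Im w \<noteq> 0\<close> by simp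
      fix v assume "v \<in> ball w (min e \<bar>Im w\<bar>)"
      then have "inC v" "sgn (Im v) = sgn (Im w)"
        using inC[of v] sgn_Im_eq_if_dist_less[of v w] True by (simp_all add: dist_commute)
      then show "sign_stem C a b v = sign_stem C a b w"
        using True by (simp add: sign_stem_def inC_def)
    qed
  next
    case False
    show ?thesis
    proof (intro exI[of _ e] conjI ballI)
      fix v assume "v \<in> ball w e"
      then have "\<not> inC v" using inC[of v] False by simp
      then show "sign_stem C a b v = sign_stem C a b w"
        using False by (simp add: sign_stem_def inC_def)
    qed (rule \<open>e > 0\<close>)
  qed
qed

text \<open>Slice regularity of F = F1 + i F2 is the Cauchy-Riemann equation for each coordinate
function (F1 . b) + i (F2 . b).\<close>

lemma slice_regular_stem_holomorphic:
  fixes F :: "complex \<Rightarrow> 'a::euclidean_space \<times> 'a"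
  assumes reg: "slice_regular_stem D F"
  shows "(\<lambda>z. Complex (fst (F z) \<bullet> b) (snd (F z) \<bullet> b)) holomorphic_on D"
proof -
  define L where "L = (\<lambda>p::'a \<times> 'a. Complex (fst p \<bullet> b) (snd p \<bullet> b))"
  have L: "bounded_linear L"
    unfolding L_def linear_conv_bounded_linear[symmetric]
    by (rule linearI) (simp_all add: complex_eq_iff inner_add_left)
  show ?thesis unfolding holomorphic_on_def field_differentiable_def
  proof
    fix z assume "z \<in> D"
    define F' where "F' = frechet_derivative F (at z)"
    have dF: "(F has_derivative F') (at z)"
      using reg \<open>z \<in> D\<close> unfolding slice_regular_stem_def C1_on_def F'_def
      by (simp add: frechet_derivative_works[symmetric])
    have CR: "F' 1 + imult (F' \<i>) = 0"
      using reg \<open>z \<in> D\<close> unfolding slice_regular_stem_def F'_def by blast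
    have "linear F'" using has_derivative_linear[OF dF] .
    have F'_h: "F' h = Re h *\<^sub>R F' 1 + Im h *\<^sub>R F' \<i>" for h
    proof -
      have "F' (Re h *\<^sub>R 1 + Im h *\<^sub>R \<i>) = Re h *\<^sub>R F' 1 + Im h *\<^sub>R F' \<i>"
        by (simp add: linear_add[OF \<open>linear F'\<close>] linear_scale[OF \<open>linear F'\<close>])
      moreover have "Re h *\<^sub>R 1 + Im h *\<^sub>R \<i> = h" by (simp add: complex_eq_iff)
      ultimately show ?thesis by simp
    qed
    have F'_i: "fst (F' \<i>) = - snd (F' 1)" "snd (F' \<i>) = fst (F' 1)"
      using CR by (auto simp: imult_def prod_eq_iff eq_neg_iff_add_eq_0 add.commute)
    have "L (F' h) = L (F' 1) * h" for h
      unfolding L_def F'_h[of h] by (simp add: complex_eq_iff F'_i algebra_simps)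
    then have "(\<lambda>h. L (F' h)) = (*) (L (F' 1))" by (rule ext)
    then have "((\<lambda>z. L (F z)) has_derivative (*) (L (F' 1))) (at z)"
      using bounded_linear.has_derivative[OF L dF] by simp
    then have "((\<lambda>z. L (F z)) has_field_derivative L (F' 1)) (at z)"
      unfolding has_field_derivative_def .
    then show "\<exists>d. ((\<lambda>z. Complex (fst (F z) \<bullet> b) (snd (F z) \<bullet> b)) has_field_derivative d)
                   (at z within D)"
      unfolding L_def by (blast intro: has_field_derivative_at_within)
  qed
qed

lemma slice_regular_stem_eq_0_if_real_eq_0:
  fixes F :: "complex \<Rightarrow> 'a::euclidean_space \<times> 'a"
  assumes reg: "slice_regular_stem D F" and "open D" and "components_meet_real D"
    and real0: "\<And>r. r \<in> D \<inter> \<real> \<Longrightarrow> F r = 0" and "z \<in> D"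
  shows "F z = 0"
proof -
  define E where "E = connected_component_set D z"
  have "open E" "connected E" "E \<subseteq> D" "z \<in> E"
    using \<open>open D\<close> \<open>z \<in> D\<close>
    by (simp_all add: E_def open_connected_component connected_component_subset)
  obtain r where r: "r \<in> E" "r \<in> \<real>"
    using \<open>components_meet_real D\<close> \<open>z \<in> D\<close> by (auto simp: components_meet_real_def E_def)
  have Fb: "fst (F z) \<bullet> b = 0 \<and> snd (F z) \<bullet> b = 0" for b
  proof -
    have hol: "(\<lambda>w. Complex (fst (F w) \<bullet> b) (snd (F w) \<bullet> b)) holomorphic_on E"
      using slice_regular_stem_holomorphic[OF reg] \<open>E \<subseteq> D\<close> by (rule holomorphic_on_subset)
    have real_zeros: "Complex (fst (F w) \<bullet> b) (snd (F w) \<bullet> b) = 0" if "w \<in> E \<inter> \<real>" for w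
      using real0[of w] that \<open>E \<subseteq> D\<close> by (auto simp: complex_eq_iff)
    have "Complex (fst (F z) \<bullet> b) (snd (F z) \<bullet> b) = 0"
      by (rule analytic_continuation[OF hol \<open>open E\<close> \<open>connected E\<close> _ r(1)
            islimpt_Int_Reals[OF r(2) \<open>open E\<close> r(1)] real_zeros \<open>z \<in> E\<close>]) blast
    then show ?thesis by (simp add: complex_eq_iff)
  qed
  have "fst (F z) = 0" "snd (F z) = 0"
    using Fb by (auto intro: euclidean_eqI)
  then show ?thesis by (simp add: prod_eq_iff)
qed

subsection \<open>Alternative real algebras with an involution\<close>

locale alternative_star_algebra =
  fixes cj :: "'a::{euclidean_space,times,one} \<Rightarrow> 'a"
  assumes alt_star: "alt_star_algebra cj"
begin

lemma mult_bilinear: "bilinear ((*) :: 'a \<Rightarrow> 'a \<Rightarrow> 'a)"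
  using alt_star by (simp add: alt_star_algebra_def)

lemma cj_linear: "linear cj"
  using alt_star by (simp add: alt_star_algebra_def)

lemmas mult_simps [simp] =
  bilinear_lzero[OF mult_bilinear] bilinear_rzero[OF mult_bilinear]
  bilinear_lmul[OF mult_bilinear] bilinear_rmul[OF mult_bilinear]
  bilinear_lneg[OF mult_bilinear] bilinear_rneg[OF mult_bilinear]

lemmas cj_simps [simp] =
  linear_0[OF cj_linear] linear_add[OF cj_linear]
  linear_neg[OF cj_linear] linear_scale[OF cj_linear]

lemma one_times [simp]: "1 * x = x" and times_one [simp]: "x * 1 = (x::'a)"
  and one_neq_0 [simp]: "(1::'a) \<noteq> 0"
  using alt_star unfolding alt_star_algebra_def by auto

lemma cj_one [simp]: "cj 1 = 1"
  using alt_star unfolding alt_star_algebra_def by (metis scaleR_one)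

lemma mult_mult_left: "x * (x * y) = (x * x) * (y::'a)"
  using alt_star unfolding alt_star_algebra_def associator_def by auto

lemma sphere_cj: "J \<in> sphere_A cj \<Longrightarrow> cj J = - J"
  by (simp add: sphere_A_def trace_A_def add_eq_0_iff)

lemma sphere_mult_self:
  assumes "J \<in> sphere_A cj"
  shows "J * J = - 1"
proof -
  have "J * cj J = 1" using assms by (simp add: sphere_A_def norm_A_def)
  then have "- (J * J) = 1" by (simp add: sphere_cj[OF assms])
  then show ?thesis by (metis minus_minus)
qed

lemma sphere_mult_eq_0_iff:
  assumes "J \<in> sphere_A cj"
  shows "J * y = 0 \<longleftrightarrow> y = 0"
proof
  assume "J * y = 0"
  then have "(J * J) * y = 0" by (simp flip: mult_mult_left)
  then show "y = 0" by (simp add: sphere_mult_self[OF assms])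
qed simp

lemma slice_repr_unique:
  assumes J: "J \<in> sphere_A cj" and J': "J' \<in> sphere_A cj"
    and eq: "\<alpha> *\<^sub>R 1 + \<beta> *\<^sub>R J = \<alpha>' *\<^sub>R 1 + \<beta>' *\<^sub>R J'"
  shows "\<alpha> = \<alpha>' \<and> \<beta> *\<^sub>R J = \<beta>' *\<^sub>R J' \<and> (\<beta> = \<beta>' \<or> \<beta> = - \<beta>')"
proof -
  have trace: "trace_A cj (a *\<^sub>R 1 + b *\<^sub>R K) = (2 * a) *\<^sub>R 1" if "K \<in> sphere_A cj" for a b K
    using sphere_cj[OF that] by (simp add: trace_A_def algebra_simps flip: scaleR_2)
  have norm: "norm_A cj (b *\<^sub>R K) = (b * b) *\<^sub>R 1" if "K \<in> sphere_A cj" for b K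
    using that by (simp add: sphere_A_def norm_A_def)
  have "\<alpha> = \<alpha>'"
    using trace[OF J, of \<alpha> \<beta>] trace[OF J', of \<alpha>' \<beta>'] eq by simp
  moreover from this have "\<beta> *\<^sub>R J = \<beta>' *\<^sub>R J'" using eq by simp
  moreover from this have "\<beta> * \<beta> = \<beta>' * \<beta>'"
    using norm[OF J, of \<beta>] norm[OF J', of \<beta>'] by simp
  then have "\<beta> = \<beta>' \<or> \<beta> = - \<beta>'" by (metis square_eq_iff)
  ultimately show ?thesis by blast
qed

lemma Omega_UN: "Omega cj (\<Union>i\<in>I. E i) = (\<Union>i\<in>I. Omega cj (E i))"
  unfolding Omega_def by blast

lemma Omega_memI: "Complex \<alpha> \<beta> \<in> D \<Longrightarrow> J \<in> sphere_A cj \<Longrightarrow> \<alpha> *\<^sub>R 1 + \<beta> *\<^sub>R J \<in> Omega cj D"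
  unfolding Omega_def by blast

lemma slice_point_in_Omega_iff:
  assumes E: "\<forall>z\<in>E. cnj z \<in> E" and J: "J \<in> sphere_A cj"
  shows "Re z *\<^sub>R 1 + Im z *\<^sub>R J \<in> Omega cj E \<longleftrightarrow> z \<in> E"
proof
  assume "Re z *\<^sub>R 1 + Im z *\<^sub>R J \<in> Omega cj E"
  then obtain \<alpha> \<beta> J' where "Complex \<alpha> \<beta> \<in> E" "J' \<in> sphere_A cj"
    and "Re z *\<^sub>R 1 + Im z *\<^sub>R J = \<alpha> *\<^sub>R 1 + \<beta> *\<^sub>R J'"
    unfolding Omega_def by blast
  with slice_repr_unique[OF J] have "Complex \<alpha> \<beta> = z \<or> Complex \<alpha> \<beta> = cnj z"
    by (metis complex.collapse complex_cnj minus_equation_iff)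
  with \<open>Complex \<alpha> \<beta> \<in> E\<close> E show "z \<in> E" by (metis complex_cnj_cnj)
next
  assume "z \<in> E"
  with J show "Re z *\<^sub>R 1 + Im z *\<^sub>R J \<in> Omega cj E"
    using Omega_memI[of "Re z" "Im z" E J] by simp
qed

subsection \<open>Slice functions and their stems\<close>

lemma stem_stem_conj: "stem D F \<Longrightarrow> stem D (stem_conj cj F)"
  by (simp add: stem_def stem_conj_def)

lemma stem_stem_prod:
  fixes F G :: "complex \<Rightarrow> 'a \<times> 'a"
  shows "stem D F \<Longrightarrow> stem D G \<Longrightarrow> stem D (stem_prod F G)"
  by (simp add: stem_def stem_prod_def cmult_def)

lemma induced_eq:
  assumes F: "stem D F" and D: "\<forall>z\<in>D. cnj z \<in> D"
    and J: "J \<in> sphere_A cj" and z: "Complex \<alpha> \<beta> \<in> D"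
  shows "induced cj D F (\<alpha> *\<^sub>R 1 + \<beta> *\<^sub>R J) = fst (F (Complex \<alpha> \<beta>)) + J * snd (F (Complex \<alpha> \<beta>))"
    (is "_ = ?v")
proof -
  have unique: "y = ?v"
    if ex: "\<exists>\<alpha>' \<beta>' J'. J' \<in> sphere_A cj \<and> Complex \<alpha>' \<beta>' \<in> D \<and>
          \<alpha> *\<^sub>R 1 + \<beta> *\<^sub>R J = \<alpha>' *\<^sub>R 1 + \<beta>' *\<^sub>R J' \<and>
          y = fst (F (Complex \<alpha>' \<beta>')) + J' * snd (F (Complex \<alpha>' \<beta>'))"
    for y
  proof -
    obtain \<alpha>' \<beta>' J' where J': "J' \<in> sphere_A cj"
      and eq: "\<alpha> *\<^sub>R 1 + \<beta> *\<^sub>R J = \<alpha>' *\<^sub>R 1 + \<beta>' *\<^sub>R J'"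
      and y: "y = fst (F (Complex \<alpha>' \<beta>')) + J' * snd (F (Complex \<alpha>' \<beta>'))"
      using ex by blast
    from slice_repr_unique[OF J J' eq] have "\<alpha>' = \<alpha>" and \<beta>J: "\<beta> *\<^sub>R J = \<beta>' *\<^sub>R J'"
      and "\<beta>' = \<beta> \<or> \<beta>' = - \<beta>" by auto
    then consider "\<beta> = 0" "\<beta>' = 0" | "\<beta> \<noteq> 0" "\<beta>' = \<beta>" | "\<beta> \<noteq> 0" "\<beta>' = - \<beta>" by force
    then show ?thesis
    proof cases
      case 1
      then have "snd (F (Complex \<alpha> \<beta>)) = 0"
        using stem_snd_real[OF F z] by (simp add: complex_is_Real_iff)
      then show ?thesis using y 1 \<open>\<alpha>' = \<alpha>\<close> by simp
    next
      case 2
      then have "J' = J" using \<beta>J by simp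
      then show ?thesis using y 2 \<open>\<alpha>' = \<alpha>\<close> by simp
    next
      case 3
      then have "\<beta> *\<^sub>R J = \<beta> *\<^sub>R (- J')" using \<beta>J by simp
      then have "J = - J'" using \<open>\<beta> \<noteq> 0\<close> by (rule scaleR_left_imp_eq[rotated])
      then have "J' = - J" by simp
      moreover have "F (Complex \<alpha>' \<beta>') = (fst (F (Complex \<alpha> \<beta>)), - snd (F (Complex \<alpha> \<beta>)))"
        using F z 3 \<open>\<alpha>' = \<alpha>\<close> unfolding stem_def by (metis complex_cnj)
      ultimately show ?thesis using y by simp
    qed
  qed
  show ?thesis
    unfolding induced_def
  proof (rule some_equality)
    show "\<exists>\<alpha>' \<beta>' J'. J' \<in> sphere_A cj \<and> Complex \<alpha>' \<beta>' \<in> D \<and>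
          \<alpha> *\<^sub>R 1 + \<beta> *\<^sub>R J = \<alpha>' *\<^sub>R 1 + \<beta>' *\<^sub>R J' \<and>
          ?v = fst (F (Complex \<alpha>' \<beta>')) + J' * snd (F (Complex \<alpha>' \<beta>'))"
      using J z by blast
  qed (rule unique)
qed

text \<open>Evaluating I(F) at the two points of the slice through J determined by z and its
conjugate gives F1 + J F2 = F1 - J F2 = 0; alternativity then kills F2.\<close>

lemma induced_eq_0_iff:
  assumes F: "stem D F" and D: "\<forall>z\<in>D. cnj z \<in> D" and "sphere_A cj \<noteq> {}"
  shows "(\<forall>x\<in>Omega cj D. induced cj D F x = 0) \<longleftrightarrow> (\<forall>z\<in>D. F z = 0)"
proof
  assume I0: "\<forall>x\<in>Omega cj D. induced cj D F x = 0"
  obtain J where J: "J \<in> sphere_A cj" using \<open>sphere_A cj \<noteq> {}\<close> by blast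
  show "\<forall>z\<in>D. F z = 0"
  proof
    fix z assume "z \<in> D"
    have z: "Complex (Re z) (Im z) \<in> D" using \<open>z \<in> D\<close> by simp
    have cnj_z: "cnj z = Complex (Re z) (- Im z)" by (simp add: complex_eq_iff)
    have z': "Complex (Re z) (- Im z) \<in> D" using D \<open>z \<in> D\<close> by (simp flip: cnj_z)
    have F_z': "F (Complex (Re z) (- Im z)) = (fst (F z), - snd (F z))"
      using F \<open>z \<in> D\<close> unfolding stem_def by (simp flip: cnj_z)
    have "induced cj D F (Re z *\<^sub>R 1 + Im z *\<^sub>R J) = 0"
      using I0 Omega_memI[OF z J] by blast
    then have plus: "fst (F z) + J * snd (F z) = 0"
      using induced_eq[OF F D J z] by simp
    have "induced cj D F (Re z *\<^sub>R 1 + (- Im z) *\<^sub>R J) = 0"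
      using I0 Omega_memI[OF z' J] by blast
    then have minus: "fst (F z) - J * snd (F z) = 0"
      using induced_eq[OF F D J z'] F_z' by simp
    have "2 *\<^sub>R fst (F z) = (fst (F z) + J * snd (F z)) + (fst (F z) - J * snd (F z))"
      by (simp add: scaleR_2)
    then have "fst (F z) = 0" using plus minus by simp
    moreover from this have "J * snd (F z) = 0" using plus by simp
    ultimately show "F z = 0" using sphere_mult_eq_0_iff[OF J] by (simp add: prod_eq_iff)
  qed
next
  assume "\<forall>z\<in>D. F z = 0"
  then show "\<forall>x\<in>Omega cj D. induced cj D F x = 0"
    using induced_eq[OF F D] unfolding Omega_def by auto
qed

lemma SR_nonsingular_iff_stem:
  assumes "\<forall>z\<in>D. cnj z \<in> D" and "sphere_A cj \<noteq> {}"
  shows "SR_nonsingular cj D \<longleftrightarrow>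
    (\<forall>F. slice_regular_stem D F \<longrightarrow>
       (\<forall>z\<in>D. stem_prod F (stem_conj cj F) z = 0) \<longrightarrow> (\<forall>z\<in>D. F z = 0))"
proof -
  have "stem D F \<Longrightarrow> stem D (stem_prod F (stem_conj cj F))" for F
    by (intro stem_stem_prod stem_stem_conj)
  then show ?thesis
    unfolding SR_nonsingular_def slice_regular_stem_def
    by (simp add: induced_eq_0_iff[OF _ assms] cong: conj_cong)
qed

subsection \<open>Omega_D as a union of slice domains\<close>

lemma components_meet_real_if_Omega_eq_Union:
  assumes D: "\<forall>z\<in>D. cnj z \<in> D" and "sphere_A cj \<noteq> {}"
    and \<U>: "\<forall>U\<in>\<U>. slice_domain cj U" and Omega_D: "Omega cj D = \<Union>\<U>"
  shows "components_meet_real D"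
  unfolding components_meet_real_def
proof
  obtain J where J: "J \<in> sphere_A cj" using \<open>sphere_A cj \<noteq> {}\<close> by blast
  fix z assume "z \<in> D"
  then obtain U where "U \<in> \<U>" "Re z *\<^sub>R 1 + Im z *\<^sub>R J \<in> U"
    using slice_point_in_Omega_iff[OF D J] Omega_D by blast
  then obtain E where E: "connected E" "E \<inter> \<real> \<noteq> {}" "\<forall>z\<in>E. cnj z \<in> E" "U = Omega cj E"
    using \<U> unfolding slice_domain_def by blast
  have "z \<in> E"
    using slice_point_in_Omega_iff[OF E(3) J] E(4) \<open>Re z *\<^sub>R 1 + Im z *\<^sub>R J \<in> U\<close> by blast
  moreover have "E \<subseteq> D"
  proof
    fix w assume "w \<in> E"
    then have "Re w *\<^sub>R 1 + Im w *\<^sub>R J \<in> Omega cj D"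
      using slice_point_in_Omega_iff[OF E(3) J] E(4) \<open>U \<in> \<U>\<close> Omega_D by blast
    then show "w \<in> D" using slice_point_in_Omega_iff[OF D J] by blast
  qed
  ultimately have "E \<subseteq> connected_component_set D z"
    using \<open>connected E\<close> by (intro connected_component_maximal)
  then show "connected_component_set D z \<inter> \<real> \<noteq> {}" using E(2) by blast
qed

lemma Omega_eq_Union_slice_domains:
  assumes "open D" and D: "\<forall>z\<in>D. cnj z \<in> D" and meet: "components_meet_real D"
  shows "\<exists>\<U>. (\<forall>U\<in>\<U>. slice_domain cj U) \<and> Omega cj D = \<Union>\<U>"
proof -
  let ?\<U> = "(\<lambda>z. Omega cj (connected_component_set D z)) ` D"
  have "slice_domain cj (Omega cj (connected_component_set D z))" if "z \<in> D" for z
    unfolding slice_domain_def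
  proof (intro exI[of _ "connected_component_set D z"] conjI)
    show "open (connected_component_set D z)"
      using \<open>open D\<close> by (rule open_connected_component)
    show "connected_component_set D z \<inter> \<real> \<noteq> {}"
      using meet \<open>z \<in> D\<close> unfolding components_meet_real_def by blast
    then obtain r where "r \<in> connected_component_set D z" "r \<in> \<real>" by blast
    then show "\<forall>w\<in>connected_component_set D z. cnj w \<in> connected_component_set D z"
      using connected_component_cnj_closed[OF D] by blast
  qed (rule connected_connected_component refl)+
  moreover have "Omega cj D = \<Union>?\<U>"
    using Omega_UN[where E = "connected_component_set D" and I = D]
    by (simp only: Union_connected_component)
  ultimately show ?thesis by (intro exI[of _ ?\<U>]) blast
qed

lemma SR_nonsingular_if_components_meet_real:
  assumes "open D" and D: "\<forall>z\<in>D. cnj z \<in> D" and "sphere_A cj \<noteq> {}"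
    and "nonsingular_alg cj" and "components_meet_real D"
  shows "SR_nonsingular cj D"
  unfolding SR_nonsingular_iff_stem[OF D \<open>sphere_A cj \<noteq> {}\<close>]
proof (intro allI impI)
  fix F :: "complex \<Rightarrow> 'a \<times> 'a"
  assume reg: "slice_regular_stem D F" and N0: "\<forall>z\<in>D. stem_prod F (stem_conj cj F) z = 0"
  have "F r = 0" if "r \<in> D \<inter> \<real>" for r
  proof -
    have "snd (F r) = 0"
      using reg that stem_snd_real[of D F r] by (simp add: slice_regular_stem_def)
    moreover have "stem_prod F (stem_conj cj F) r = 0" using N0 that by blast
    ultimately have "norm_A cj (fst (F r)) = 0"
      by (simp add: stem_prod_def stem_conj_def cmult_def norm_A_def zero_prod_def)
    then show ?thesis
      using \<open>nonsingular_alg cj\<close> \<open>snd (F r) = 0\<close> by (simp add: nonsingular_alg_def prod_eq_iff)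
  qed
  then show "\<forall>z\<in>D. F z = 0"
    using slice_regular_stem_eq_0_if_real_eq_0[OF reg \<open>open D\<close> \<open>components_meet_real D\<close>] by blast
qed

lemma nonsingular_alg_if_SR_nonsingular:
  assumes "SR_nonsingular cj D" and D: "\<forall>z\<in>D. cnj z \<in> D" and "sphere_A cj \<noteq> {}"
    and "D \<noteq> {}"
  shows "nonsingular_alg cj"
  unfolding nonsingular_alg_def
proof (intro allI impI)
  fix x assume "norm_A cj x = 0"
  define F where "F = (\<lambda>z::complex. (x, 0::'a))"
  have "slice_regular_stem D F"
    by (rule slice_regular_stem_locally_constant) (auto simp: F_def stem_def gt_ex)
  moreover have "\<forall>z\<in>D. stem_prod F (stem_conj cj F) z = 0"
    using \<open>norm_A cj x = 0\<close>
    by (simp add: F_def stem_prod_def stem_conj_def cmult_def norm_A_def zero_prod_def)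
  ultimately have "\<forall>z\<in>D. F z = 0"
    using assms(1) unfolding SR_nonsingular_iff_stem[OF D \<open>sphere_A cj \<noteq> {}\<close>] by blast
  then show "x = 0" using \<open>D \<noteq> {}\<close> by (auto simp: F_def zero_prod_def)
qed

text \<open>(1 + i c J)(1 + i c J)^c = (1 + i c J)(1 - i c J) = 1 + c^2 J J = 1 - c^2\<close>

lemma cmult_one_sphere_conj_eq_0:
  assumes "J \<in> sphere_A cj" and "c * c = 1"
  shows "cmult (1, c *\<^sub>R J) (cj 1, cj (c *\<^sub>R J)) = 0"
  using assms sphere_cj[OF assms(1)] sphere_mult_self[OF assms(1)]
  by (simp add: cmult_def zero_prod_def)

lemma components_meet_real_if_SR_nonsingular:
  assumes "SR_nonsingular cj D" and "open D" and D: "\<forall>z\<in>D. cnj z \<in> D" and "sphere_A cj \<noteq> {}"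
  shows "components_meet_real D"
  unfolding components_meet_real_def
proof (intro ballI notI)
  fix z assume "z \<in> D"
  obtain J where J: "J \<in> sphere_A cj" using \<open>sphere_A cj \<noteq> {}\<close> by blast
  define C where "C = connected_component_set D z"
  define F where "F = sign_stem C (1::'a) J"
  assume "C \<inter> \<real> = {}"
  then have "slice_regular_stem D F"
    unfolding F_def by (rule slice_regular_stem_sign_stem[OF \<open>open D\<close> D C_def])
  moreover have "stem_prod F (stem_conj cj F) w = 0" for w
  proof (cases "w \<in> C \<or> cnj w \<in> C")
    case True
    then have "Im w \<noteq> 0" using \<open>C \<inter> \<real> = {}\<close> by (auto simp: complex_is_Real_iff)
    then have c: "sgn (Im w) * sgn (Im w) = 1" by (simp add: sgn_if)
    have "F w = (1, sgn (Im w) *\<^sub>R J)" using True by (simp add: F_def sign_stem_def)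
    then show ?thesis
      unfolding stem_prod_def stem_conj_def
      by (simp only: fst_conv snd_conv cmult_one_sphere_conj_eq_0[OF J c])
  next
    case False
    then show ?thesis
      by (simp add: F_def sign_stem_def stem_prod_def stem_conj_def cmult_def zero_prod_def)
  qed
  ultimately have "F z = 0"
    using assms(1) \<open>z \<in> D\<close> unfolding SR_nonsingular_iff_stem[OF D \<open>sphere_A cj \<noteq> {}\<close>] by blast
  moreover have "z \<in> C" using \<open>z \<in> D\<close> by (simp add: C_def)
  ultimately show False by (simp add: F_def sign_stem_def zero_prod_def)
qed

end

theorem proposition4p14:
  fixes cj :: "'a::{euclidean_space,times,one} \<Rightarrow> 'a" and D :: "complex set"
  assumes "alt_star_algebra cj"
    and "sphere_A cj \<noteq> {}"
    and "open D" and "D \<noteq> {}" and "\<forall>z\<in>D. cnj z \<in> D"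
    and "open (Omega cj D)"
  shows "SR_nonsingular cj D \<longleftrightarrow>
         nonsingular_alg cj \<and> (\<exists>\<U>. (\<forall>U\<in>\<U>. slice_domain cj U) \<and> Omega cj D = \<Union>\<U>)"
proof -
  interpret alternative_star_algebra cj by (rule alternative_star_algebra.intro) fact
  have "SR_nonsingular cj D \<longleftrightarrow> nonsingular_alg cj \<and> components_meet_real D"
  proof
    assume "SR_nonsingular cj D"
    then show "nonsingular_alg cj \<and> components_meet_real D"
      using nonsingular_alg_if_SR_nonsingular[OF _ assms(5,2,4)]
        components_meet_real_if_SR_nonsingular[OF _ assms(3,5,2)] by blast
  next
    assume "nonsingular_alg cj \<and> components_meet_real D"
    then show "SR_nonsingular cj D"
      using SR_nonsingular_if_components_meet_real[OF assms(3,5,2)] by blast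
  qed
  moreover have "(\<exists>\<U>. (\<forall>U\<in>\<U>. slice_domain cj U) \<and> Omega cj D = \<Union>\<U>) \<longleftrightarrow> components_meet_real D"
    using components_meet_real_if_Omega_eq_Union[OF assms(5,2)]
      Omega_eq_Union_slice_domains[OF assms(3,5)] by blast
  ultimately show ?thesis by simp
qed

end
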